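(* Let $M,N\in\mathbb{N}$ and let $\mathbf{M}(M,N)$ be the Motzkin shift. Let $G'$ be the directed graph with one vertex and $M+N+1$ loops named $\lambda_1,\rho_1,\dots,\rho_M,1_1,\dots,1_N$, and let $X_{G'}$ be its edge shift, so that $\mathcal{B}_n(X_{G'})$ is the set of all words of length $n$ over the alphabet $\{\lambda_1,\rho_1,\dots,\rho_M,1_1,\dots,1_N\}$. Then for every $n\geq 1$ there exists a bijection from the set $$\{x\in P_n(\mathbf{M}(M,N)) : \text{the multiplier of } x \text{ is positive, neutral, or equal to } \lambda_1^k \text{ for some } k\geq 1\}$$ onto $\mathcal{B}_n(X_{G'})$.
   Context: Alphabet $\Sigma=\{\lambda_1,\dots,\lambda_M,\rho_1,\dots,\rho_M,1_1,\dots,1_N\}$. $\mathcal{M}(M,N)$ is the monoid with zero generated by $\Sigma$ and an identity $\mathbf{1}$, subject only to the relations $\lambda_i\rho_i=\mathbf{1}$ ($1\le i\le M$), $\lambda_i\rho_j=0$ ($i\neq j$), $1_i\cdot\alpha=\alpha\cdot 1_i=\alpha$ for all $\alpha\in\Sigma\cup\{\mathbf 1\}$ (so $1_i1_j=\mathbf 1$), $\mathbf 1$ is the identity and $0$ is absorbing; no other relations are imposed (e.g. $\rho_i\lambda_j$ does not reduce). The map $\mathit{red}:\Sigma^*\to\mathcal{M}(M,N)$ sends a word $\alpha_1\cdots\alpha_n$ to the product $\alpha_1\cdot\ldots\cdot\alpha_n$ and the empty word to $\mathbf 1$. The Motzkin shift is $\mathbf{M}(M,N)=\{x\in\Sigma^{\mathbb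 Z}:\mathit{red}(x_ix_{i+1}\cdots x_j)\neq 0 \text{ for all } i\le j\}$ with the shift map $\sigma$. For a subshift $X$, $\mathcal B_n(X)$ is the set of words of length $n$ occurring in points of $X$, and $P_n(X)=\{x\in X:\sigma^n x=x\}$; each $x\in P_n(X)$ equals $\alpha^\infty$ for the block $\alpha=x_0\cdots x_{n-1}\in\mathcal B_n(X)$ (its $n$-periodic defining block). Let $\mathcal M^+$ be the (free) submonoid generated by $\rho_1,\dots,\rho_M$ and $\mathcal M^-$ the (free) submonoid generated by $\lambda_1,\dots,\lambda_M$. Every block $\alpha$ can be written $\alpha=\alpha_+\alpha_-$ with $\mathit{red}(\alpha_+)\in\mathcal M^+$ and $\mathit{red}(\alpha_-)\in\mathcal M^-$; the multiplier of $\alpha$ (and of $x=\alpha^\infty$) is $\mathit{red}(\alpha_-\alpha_+)$. It is called positive if it lies in $\mathcal M^+\setminus\{\mathbf 1\}$, negative if it lies in $\mathcal M^-\setminus\{\mathbf 1\}$, and neutral if it equals $\mathbf 1$. *)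

theory Defs
  imports Main
begin

datatype sym = Lam nat | Rho nat | One nat

definition alphabet :: "nat \<Rightarrow> nat \<Rightarrow> sym set" where
  "alphabet M N = {Lam i | i. 1 \<le> i \<and> i \<le> M} \<union> {Rho i | i. 1 \<le> i \<and> i \<le> M}
                  \<union> {One i | i. 1 \<le> i \<and> i \<le> N}"

text \<open>Elements of the monoid M(M,N), represented by their normal forms:
  None is the zero; Some (r, l) is rho_{r!0}...rho_{r!(k-1)} lambda_{l!0}...lambda_{l!(m-1)}.
  Since lambda_i rho_j reduces (to 1 or 0) and nothing else reduces,
  every nonzero element has a unique such normal form.\<close>
type_synonym mval = "(nat list \<times> nat list) option"

fun mm :: "nat list \<Rightarrow> nat list \<Rightarrow> nat list \<Rightarrow> nat list \<Rightarrow> mval" where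
  "mm r1 [] r2 l2 = Some (r1 @ r2, l2)"
| "mm r1 l1 [] l2 = Some (r1, l1 @ l2)"
| "mm r1 l1 (j # r2) l2 = (if last l1 = j then mm r1 (butlast l1) r2 l2 else None)"

fun mmult :: "mval \<Rightarrow> mval \<Rightarrow> mval" where
  "mmult (Some (r1, l1)) (Some (r2, l2)) = mm r1 l1 r2 l2"
| "mmult _ _ = None"

definition munit :: mval where "munit = Some ([], [])"

fun letter :: "sym \<Rightarrow> mval" where
  "letter (Lam i) = Some ([], [i])"
| "letter (Rho i) = Some ([i], [])"
| "letter (One i) = munit"

definition red :: "sym list \<Rightarrow> mval" where
  "red w = foldl (\<lambda>m a. mmult m (letter a)) munit w"

definition motzkin :: "nat \<Rightarrow> nat \<Rightarrow> (int \<Rightarrow> sym) set" where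
  "motzkin M N = {x. (\<forall>i. x i \<in> alphabet M N) \<and> (\<forall>i j. i \<le> j \<longrightarrow> red (map x [i..j]) \<noteq> None)}"

definition per_pts :: "(int \<Rightarrow> sym) set \<Rightarrow> nat \<Rightarrow> (int \<Rightarrow> sym) set" where
  "per_pts X n = {x \<in> X. \<forall>i. x (i + int n) = x i}"

definition block :: "(int \<Rightarrow> sym) \<Rightarrow> nat \<Rightarrow> sym list" where
  "block x n = map (\<lambda>i. x (int i)) [0..<n]"

definition in_Mplus :: "mval \<Rightarrow> bool" where "in_Mplus m \<longleftrightarrow> (\<exists>r. m = Some (r, []))"
definition in_Mminus :: "mval \<Rightarrow> bool" where "in_Mminus m \<longleftrightarrow> (\<exists>l. m = Some ([], l))"

definition multiplier :: "sym list \<Rightarrow> mval" where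
  "multiplier a = (let k = (SOME k. k \<le> length a \<and> in_Mplus (red (take k a)) \<and> in_Mminus (red (drop k a)))
                   in red (drop k a @ take k a))"

definition positive :: "mval \<Rightarrow> bool" where "positive m \<longleftrightarrow> in_Mplus m \<and> m \<noteq> munit"
definition neutral :: "mval \<Rightarrow> bool" where "neutral m \<longleftrightarrow> m = munit"

definition alphabet' :: "nat \<Rightarrow> nat \<Rightarrow> sym set" where
  "alphabet' M N = {Lam 1} \<union> {Rho i | i. 1 \<le> i \<and> i \<le> M} \<union> {One i | i. 1 \<le> i \<and> i \<le> N}"

end

(*
  A point of P_n(M(M,N)) is the periodic extension of its block a. Conversely, if red a and the
  multiplier of a are nonzero, the multiplier lies in M+ or M-, so every power of a has nonzero
  reduction and the periodic extension of a lies in the Motzkin shift.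
  Replacing every lambda_i by lambda_1 sends blocks to words of X_G'. A cancelled lambda must
  carry the index of the rho cancelling it, so two nonzero words with the same image differ only
  in the indices of the lambdas that survive reduction. Hence the map is injective on blocks whose
  multiplier contains no lambda other than lambda_1. For surjectivity, cut a word of X_G' after
  a prefix of maximal balance and rotate; giving every lambda of the rotated word the index of
  the nearest unmatched rho to its right (or 1) and rotating back yields a block of the required
  kind.
*)

theory Submission
  imports Defs
begin

lemma mm_Nil_right [simp]: "mm r l [] l' = Some (r, l @ l')"
  by (cases l) auto

lemma mm_Cons_right:
  "l \<noteq> [] \<Longrightarrow> mm r l (j # r') l' = (if last l = j then mm r (butlast l) r' l' else None)"
  by (cases l) auto

lemma mm_frame: "mm r l r' l' = map_option (\<lambda>(a, b). (r @ a, b @ l')) (mm [] l r' [])"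
proof (induction r' arbitrary: l)
  case (Cons j r')
  then show ?case by (cases "l = []") (auto simp: mm_Cons_right)
qed simp

lemma mm_snoc_right:
  "mm [] l (r' @ [j]) [] = Option.bind (mm [] l r' []) (\<lambda>(a, b). mm a b [j] [])"
proof (induction r' arbitrary: l)
  case (Cons i r')
  then show ?case by (cases "l = []") (auto simp: mm_Cons_right)
qed (cases l; auto simp: mm_Cons_right)

lemma mm_singleton_right [simp]:
  "mm r l [j] [] = (if l = [] then Some (r @ [j], []) else if last l = j then Some (r, butlast l) else None)"
  by (cases l) (auto simp: mm_Cons_right)

lemma mmult_munit_right [simp]: "mmult m munit = m"
  by (cases m) (auto simp: munit_def)

lemma mmult_munit_left [simp]: "mmult munit m = m"
  by (cases m) (auto simp: munit_def)

lemma mmult_assoc_letter: "mmult (mmult m m') (letter a) = mmult m (mmult m' (letter a))"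
proof -
  consider "m = None" | "m' = None" | r l r' l' where "m = Some (r, l)" "m' = Some (r', l')"
    by (metis not_None_eq surj_pair)
  then show ?thesis
  proof cases
    case 3
    show ?thesis
    proof (cases "mm [] l r' []")
      case None
      then show ?thesis using 3
        by (cases a)
          (auto simp: mm_snoc_right munit_def mm_frame[of r l r'] mm_frame[of r l "r' @ [j]" for j])
    next
      case Some
      then obtain x y where xy: "mm [] l r' [] = Some (x, y)"
        by fastforce
      have frame: "mm r l r' L = Some (r @ x, y @ L)" for L
        using xy by (simp add: mm_frame[of r l r'])
      show ?thesis using 3
        by (cases a) (auto simp: frame mm_snoc_right xy butlast_append munit_def
            mm_frame[of r l "r' @ [j]" for j])
    qed
  qed simp_all
qed

lemma red_Nil [simp]: "red [] = munit"
  by (simp add: red_def)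

lemma red_append: "red (u @ v) = mmult (red u) (red v)"
proof -
  have "foldl (\<lambda>m a. mmult m (letter a)) (mmult m m') v =
        mmult m (foldl (\<lambda>m a. mmult m (letter a)) m' v)" for m m'
    by (induction v arbitrary: m') (simp_all add: mmult_assoc_letter)
  from this[of "red u" munit] show ?thesis
    by (simp add: red_def)
qed

lemma red_singleton [simp]: "red [a] = letter a"
  by (simp add: red_def)

lemma red_Cons: "red (a # u) = mmult (letter a) (red u)"
  using red_append[of "[a]" u] by simp

lemma red_snoc: "red (u @ [a]) = mmult (red u) (letter a)"
  using red_append[of u "[a]"] by simp

lemma red_append_nonzero: "red (u @ v) \<noteq> None \<Longrightarrow> red u \<noteq> None \<and> red v \<noteq> None"
  by (cases "red u"; cases "red v") (auto simp: red_append)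

lemma red_snocE:
  assumes "red (u @ [a]) = Some (r, l)"
  obtains r0 l0 where "red u = Some (r0, l0)" "mmult (Some (r0, l0)) (letter a) = Some (r, l)"
  using assms red_append_nonzero[of u "[a]"] by (cases "red u") (auto simp: red_snoc)

lemma red_Rho_indices: "red u = Some (r, l) \<Longrightarrow> Rho ` set r \<subseteq> set u"
proof (induction u arbitrary: r l rule: rev_induct)
  case (snoc a u)
  then obtain r0 l0 where "red u = Some (r0, l0)" "mmult (Some (r0, l0)) (letter a) = Some (r, l)"
    by (blast elim: red_snocE)
  with snoc.IH show ?case
    by (cases a) (auto simp: munit_def image_subset_iff split: if_splits)
qed (simp add: munit_def)

fun height :: "sym \<Rightarrow> int" where
  "height (Lam i) = -1"
| "height (Rho i) = 1"
| "height (One i) = 0"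

definition balance :: "sym list \<Rightarrow> int" where
  "balance w = sum_list (map height w)"

lemma balance_Nil [simp]: "balance [] = 0"
  and balance_Cons [simp]: "balance (a # w) = height a + balance w"
  and balance_append [simp]: "balance (u @ v) = balance u + balance v"
  by (simp_all add: balance_def)

lemma red_balance: "red u = Some (r, l) \<Longrightarrow> int (length r) - int (length l) = balance u"
proof (induction u arbitrary: r l rule: rev_induct)
  case (snoc a u)
  then obtain r0 l0 where "red u = Some (r0, l0)" "mmult (Some (r0, l0)) (letter a) = Some (r, l)"
    by (blast elim: red_snocE)
  with snoc.IH show ?case
    by (cases a) (auto simp: munit_def of_nat_diff Suc_le_eq split: if_splits)
qed (simp add: munit_def)

fun collapse :: "sym \<Rightarrow> sym" where
  "collapse (Lam i) = Lam 1"
| "collapse (Rho j) = Rho j"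
| "collapse (One i) = One i"

lemma height_collapse [simp]: "height (collapse a) = height a"
  by (cases a) auto

lemma balance_map_collapse [simp]: "balance (map collapse w) = balance w"
  by (induction w) auto

lemma map_collapse_snoc_eqE:
  assumes "map collapse (u @ [a]) = map collapse u'"
  obtains u0 a' where "u' = u0 @ [a']" "map collapse u = map collapse u0" "collapse a = collapse a'"
  using assms by (cases u' rule: rev_cases) auto

lemma red_collapse_eq:
  assumes "map collapse u = map collapse u'" "red u = Some (r, l)" "red u' = Some (r', l')"
  shows "r = r' \<and> length l = length l' \<and> (l = l' \<longrightarrow> u = u')"
  using assms
proof (induction u arbitrary: u' r l r' l' rule: rev_induct)
  case (snoc a u)
  obtain u0 a' where u': "u' = u0 @ [a']" and cu: "map collapse u = map collapse u0"
    and ca: "collapse a = collapse a'"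
    using snoc.prems(1) by (rule map_collapse_snoc_eqE)
  obtain r0 l0 where u: "red u = Some (r0, l0)" and e: "mmult (Some (r0, l0)) (letter a) = Some (r, l)"
    using snoc.prems(2) by (rule red_snocE)
  obtain r0' l0' where u0: "red u0 = Some (r0', l0')"
    and e': "mmult (Some (r0', l0')) (letter a') = Some (r', l')"
    using snoc.prems(3) unfolding u' by (rule red_snocE)
  have "r0 = r0' \<and> length l0 = length l0' \<and> (l0 = l0' \<longrightarrow> u = u0)"
    using snoc.IH[OF cu u u0] .
  with ca e e' show ?case
    unfolding u'
    by (cases a; cases a') (auto simp: munit_def split: if_splits, metis append_butlast_last_id)
qed (simp add: munit_def)

lemma collapse_eq_common_split:
  assumes "map collapse u = map collapse u'" "red u = Some (r, l)" "red u' = Some (r', l')"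
  shows "\<exists>k \<le> length u. red (take k u) = Some (r, []) \<and> red (drop k u) = Some ([], l) \<and>
           red (take k u') = Some (r', []) \<and> red (drop k u') = Some ([], l')"
  using assms
proof (induction u arbitrary: u' r l r' l' rule: rev_induct)
  case (snoc a u)
  obtain u0 a' where u': "u' = u0 @ [a']" and cu: "map collapse u = map collapse u0"
    and ca: "collapse a = collapse a'"
    using snoc.prems(1) by (rule map_collapse_snoc_eqE)
  obtain r0 l0 where u: "red u = Some (r0, l0)" and e: "mmult (Some (r0, l0)) (letter a) = Some (r, l)"
    using snoc.prems(2) by (rule red_snocE)
  obtain r0' l0' where u0: "red u0 = Some (r0', l0')"
    and e': "mmult (Some (r0', l0')) (letter a') = Some (r', l')"
    using snoc.prems(3) unfolding u' by (rule red_snocE)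
  have len: "length u0 = length u"
    using cu by (metis length_map)
  have same: "r0 = r0' \<and> length l0 = length l0'"
    using red_collapse_eq[OF cu u u0] by simp
  obtain k where k: "k \<le> length u" "red (take k u) = Some (r0, [])" "red (drop k u) = Some ([], l0)"
    "red (take k u0) = Some (r0', [])" "red (drop k u0) = Some ([], l0')"
    using snoc.IH[OF cu u u0] by blast
  show ?case
  proof (cases "\<exists>j. a = Rho j \<and> l0 = []")
    case True
    with ca same have "\<exists>j. a' = Rho j \<and> l0' = []"
      by (cases a') auto
    with True show ?thesis
      using e e' u' len snoc.prems(2,3)
      by (intro exI[of _ "Suc (length u)"]) (auto simp: munit_def)
  next
    case False
    with ca same have "\<not> (\<exists>j. a' = Rho j \<and> l0' = [])"
      by (cases a; cases a') auto
    with False ca e e' k u' len show ?thesis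
      by (intro exI[of _ k]) (cases a; cases a'; auto simp: red_snoc munit_def split: if_splits)
  qed
qed (simp add: munit_def)

lemma red_split:
  assumes "red a = Some (r, l)"
  obtains k where "k \<le> length a" "red (take k a) = Some (r, [])" "red (drop k a) = Some ([], l)"
  using collapse_eq_common_split[OF refl assms assms] by blast

lemma multiplier_eq:
  assumes "red a = Some (r, l)"
  shows "multiplier a = mmult (Some ([], l)) (Some (r, []))"
proof -
  let ?P = "\<lambda>k. k \<le> length a \<and> in_Mplus (red (take k a)) \<and> in_Mminus (red (drop k a))"
  define k where "k = (SOME k. ?P k)"
  obtain k0 where "k0 \<le> length a" "red (take k0 a) = Some (r, [])" "red (drop k0 a) = Some ([], l)"
    using assms by (rule red_split)
  then have "?P k0"
    by (simp add: in_Mplus_def in_Mminus_def)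
  then have "?P k"
    unfolding k_def by (rule someI)
  then obtain r' l' where t: "red (take k a) = Some (r', [])" and d: "red (drop k a) = Some ([], l')"
    by (auto simp: in_Mplus_def in_Mminus_def)
  have "red a = Some (r', l')"
    using red_append[of "take k a" "drop k a"] t d by simp
  with assms t d show ?thesis
    by (simp add: multiplier_def k_def[symmetric] red_append)
qed

lemma mm_Mminus_Mplus: "mm [] l r [] = Some (x, y) \<Longrightarrow> x = [] \<or> y = []"
proof (induction r arbitrary: l)
  case (Cons j r)
  then show ?case by (cases "l = []") (auto simp: mm_Cons_right split: if_splits)
qed simp

lemma multiplier_Mplus_or_Mminus:
  assumes "red a \<noteq> None" "multiplier a \<noteq> None"
  shows "in_Mplus (multiplier a) \<or> in_Mminus (multiplier a)"
proof -
  obtain r l where "red a = Some (r, l)"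
    using assms(1) by auto
  with assms(2) show ?thesis
    using mm_Mminus_Mplus[of l r] by (auto simp: multiplier_eq in_Mplus_def in_Mminus_def)
qed

definition plus_or_lambda1_power :: "mval \<Rightarrow> bool" where
  "plus_or_lambda1_power m \<longleftrightarrow> in_Mplus m \<or> (\<exists>k. m = Some ([], replicate k 1))"

lemma inj_on_map_collapse:
  "inj_on (map collapse) {a. red a \<noteq> None \<and> plus_or_lambda1_power (multiplier a)}"
proof (rule inj_onI)
  fix x y
  assume "x \<in> {a. red a \<noteq> None \<and> plus_or_lambda1_power (multiplier a)}"
    and "y \<in> {a. red a \<noteq> None \<and> plus_or_lambda1_power (multiplier a)}"
    and c: "map collapse x = map collapse y"
  then have "red x \<noteq> None" "red y \<noteq> None"
    and px: "plus_or_lambda1_power (multiplier x)" and py: "plus_or_lambda1_power (multiplier y)"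
    by auto
  then obtain r l r' l' where x: "red x = Some (r, l)" and y: "red y = Some (r', l')"
    by auto
  obtain k where k: "red (take k x) = Some (r, [])" "red (drop k x) = Some ([], l)"
    "red (take k y) = Some (r', [])" "red (drop k y) = Some ([], l')"
    using collapse_eq_common_split[OF c x y] by blast
  have mx: "multiplier x = red (drop k x @ take k x)" and my: "multiplier y = red (drop k y @ take k y)"
    using multiplier_eq[OF x] multiplier_eq[OF y] k by (simp_all add: red_append)
  have cc: "map collapse (drop k x @ take k x) = map collapse (drop k y @ take k y)"
    using c by (simp flip: drop_map take_map)
  obtain p q p' q' where mx': "multiplier x = Some (p, q)" and my': "multiplier y = Some (p', q')"
    using px py by (auto simp: plus_or_lambda1_power_def in_Mplus_def)
  note same = red_collapse_eq[OF cc mx'[unfolded mx] my'[unfolded my]]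
  \<comment> \<open>both q and q' consist of lambda_1 only and have the same length\<close>
  have "q = q'"
    using px py same by (auto simp: plus_or_lambda1_power_def in_Mplus_def mx' my')
  with same have "drop k x @ take k x = drop k y @ take k y"
    by simp
  moreover have "length x = length y"
    using c by (metis length_map)
  ultimately show "x = y"
    by (metis append_eq_append_conv append_take_drop_id length_drop)
qed

lemma red_concat_replicate_Mplus: "in_Mplus (red u) \<Longrightarrow> in_Mplus (red (concat (replicate K u)))"
  by (induction K) (auto simp: in_Mplus_def munit_def red_append)

lemma red_concat_replicate_Mminus: "in_Mminus (red u) \<Longrightarrow> in_Mminus (red (concat (replicate K u)))"
  by (induction K) (auto simp: in_Mminus_def munit_def red_append)

lemma concat_replicate_Suc_rotate:
  "concat (replicate (Suc K) (t @ d)) = t @ concat (replicate K (d @ t)) @ d"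
  by (induction K) auto

lemma red_concat_replicate_nonzero:
  assumes "red a \<noteq> None" "multiplier a \<noteq> None"
  shows "red (concat (replicate K a)) \<noteq> None"
proof (cases K)
  case (Suc K')
  obtain r l where a: "red a = Some (r, l)"
    using assms(1) by auto
  then obtain k where t: "red (take k a) = Some (r, [])" and d: "red (drop k a) = Some ([], l)"
    by (rule red_split)
  let ?rot = "drop k a @ take k a"
  have "multiplier a = red ?rot"
    using multiplier_eq[OF a] t d by (simp add: red_append)
  then have "in_Mplus (red ?rot) \<or> in_Mminus (red ?rot)"
    using multiplier_Mplus_or_Mminus[OF assms] by simp
  then have "in_Mplus (red (concat (replicate K' ?rot))) \<or> in_Mminus (red (concat (replicate K' ?rot)))"
    using red_concat_replicate_Mplus red_concat_replicate_Mminus by blast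
  then show ?thesis
    using concat_replicate_Suc_rotate[of K' "take k a" "drop k a"] t d Suc
    by (auto simp: red_append in_Mplus_def in_Mminus_def)
qed (simp add: munit_def)

lemma nth_concat_replicate:
  "m < K * length a \<Longrightarrow> concat (replicate K a) ! m = a ! (m mod length a)"
proof (induction K arbitrary: m)
  case (Suc K)
  then show ?case by (auto simp: nth_append le_mod_geq not_less)
qed simp

definition periodic_point :: "sym list \<Rightarrow> int \<Rightarrow> sym" where
  "periodic_point a i = a ! nat (i mod int (length a))"

lemma block_periodic_point: "block (periodic_point a) (length a) = a"
  by (rule nth_equalityI) (simp_all add: block_def periodic_point_def flip: of_nat_mod)

lemma per_pts_periodic_point_block:
  assumes x: "x \<in> per_pts X n" and n: "0 < n"
  shows "periodic_point (block x n) = x"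
proof
  fix i
  have period: "x (j + int n) = x j" for j
    using x by (simp add: per_pts_def)
  have "x (j + int n * q) = x j" for j q
  proof (induction q rule: int_induct[where k = 0])
    case (step1 q)
    then show ?case using period[of "j + int n * q"] by (simp add: algebra_simps)
  next
    case (step2 q)
    then show ?case using period[of "j + int n * (q - 1)"] by (simp add: algebra_simps)
  qed simp
  from this[of "i mod int n" "i div int n"] have "x (i mod int n) = x i"
    by simp
  moreover have "nat (i mod int n) < n"
    using n by (simp add: nat_less_iff)
  ultimately show "periodic_point (block x n) i = x i"
    by (simp add: periodic_point_def block_def)
qed

lemma periodic_point_motzkin:
  assumes a: "a \<noteq> []" "set a \<subseteq> alphabet M N"
    and powers: "\<And>K. red (concat (replicate K a)) \<noteq> None"
  shows "periodic_point a \<in> motzkin M N"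
proof -
  let ?x = "periodic_point a" and ?n = "length a"
  have "?x i \<in> alphabet M N" for i
    using a by (auto simp: periodic_point_def intro!: nth_mem nat_less_iff[THEN iffD2])
  moreover have "red (map ?x [i..j]) \<noteq> None" if "i \<le> j" for i j
  proof -
    define d where "d = nat (j - i + 1)"
    define p where "p = nat (i mod int ?n)"
    define P where "P = concat (replicate (Suc d) a)"
    have p: "p < ?n"
      using a by (simp add: p_def nat_less_iff)
    have "d \<le> d * ?n"
      using a by (simp add: Suc_leI)
    moreover have "length P = ?n + d * ?n"
      by (simp add: P_def length_concat sum_list_replicate)
    ultimately have lenP: "p + d < length P"
      using p by linarith
    have Pnth: "P ! m = a ! (m mod ?n)" if "m < length P" for m
      unfolding P_def
      by (rule nth_concat_replicate) (use that in \<open>simp add: P_def length_concat sum_list_replicate\<close>)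
    have "map ?x [i..j] = take d (drop p P)"
    proof (rule nth_equalityI)
      fix t assume "t < length (map ?x [i..j])"
      then have t: "t < d" by (simp add: d_def)
      have "int ((p + t) mod ?n) = (i + int t) mod int ?n"
        using a by (simp add: p_def of_nat_mod mod_add_left_eq)
      then have "nat ((i + int t) mod int ?n) = (p + t) mod ?n"
        by (metis nat_int)
      then have "map ?x [i..j] ! t = a ! ((p + t) mod ?n)"
        using t that by (simp add: d_def periodic_point_def)
      also have "\<dots> = take d (drop p P) ! t"
        using t lenP by (simp add: Pnth)
      finally show "map ?x [i..j] ! t = take d (drop p P) ! t" .
    qed (use lenP in \<open>simp add: d_def\<close>)
    moreover have "red (take d (drop p P)) \<noteq> None"
    proof -
      have "P = take p P @ take d (drop p P) @ drop d (drop p P)"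
        by (simp only: append_take_drop_id)
      moreover have "red P \<noteq> None"
        unfolding P_def by (rule powers)
      ultimately show ?thesis
        by (metis red_append_nonzero)
    qed
    ultimately show ?thesis by simp
  qed
  ultimately show ?thesis
    by (simp add: motzkin_def)
qed

definition blocks_with_multiplier :: "nat \<Rightarrow> nat \<Rightarrow> nat \<Rightarrow> (mval \<Rightarrow> bool) \<Rightarrow> sym list set" where
  "blocks_with_multiplier M N n P =
     {a. length a = n \<and> set a \<subseteq> alphabet M N \<and> red a \<noteq> None \<and> P (multiplier a)}"

lemma block_eq_map_upto: "block x n = map x [0..int n - 1]"
  by (rule nth_equalityI) (simp_all add: block_def)

lemma bij_betw_block_per_pts:
  assumes n: "0 < n" and P: "\<And>m. P m \<Longrightarrow> m \<noteq> None"
  shows "bij_betw (\<lambda>x. block x n) {x \<in> per_pts (motzkin M N) n. P (multiplier (block x n))}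
           (blocks_with_multiplier M N n P)"
proof -
  have point: "periodic_point (block x n) = x \<and> length (block x n) = n
      \<and> set (block x n) \<subseteq> alphabet M N \<and> red (block x n) \<noteq> None"
    if x: "x \<in> per_pts (motzkin M N) n" for x
  proof -
    from x have "x \<in> motzkin M N"
      by (simp add: per_pts_def)
    moreover have "periodic_point (block x n) = x"
      using x n by (rule per_pts_periodic_point_block)
    ultimately show ?thesis
      using n by (auto simp: motzkin_def block_eq_map_upto)
  qed
  have block: "block (periodic_point a) n = a \<and> periodic_point a \<in> per_pts (motzkin M N) n"
    if a: "a \<in> blocks_with_multiplier M N n P" for a
  proof -
    have "red (concat (replicate K a)) \<noteq> None" for K
      using red_concat_replicate_nonzero a P by (auto simp: blocks_with_multiplier_def)
    with a n show ?thesis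
      using block_periodic_point[of a]
      by (auto simp: blocks_with_multiplier_def per_pts_def periodic_point_def
          intro: periodic_point_motzkin)
  qed
  show ?thesis
    by (rule bij_betw_byWitness[where f' = periodic_point])
      (use point block in \<open>auto simp: blocks_with_multiplier_def\<close>)
qed

lemma in_Mplus_red_if_suffix_balance_nonneg:
  "red u \<noteq> None \<Longrightarrow> (\<And>t. 0 \<le> balance (drop t u)) \<Longrightarrow> in_Mplus (red u)"
proof (induction u)
  case (Cons a u)
  have "red u \<noteq> None"
    using Cons.prems(1) red_append_nonzero[of "[a]" u] by simp
  moreover have "0 \<le> balance (drop t u)" for t
    using Cons.prems(2)[of "Suc t"] by simp
  ultimately obtain r where r: "red u = Some (r, [])"
    using Cons.IH by (auto simp: in_Mplus_def)
  have "0 \<le> height a + int (length r)"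
    using Cons.prems(2)[of 0] red_balance[OF r] by simp
  with Cons.prems(1) r show ?case
    by (cases a; cases r) (auto simp: in_Mplus_def red_Cons munit_def split: if_splits)
qed (simp add: in_Mplus_def munit_def)

lemma in_Mminus_red_if_prefix_balance_nonpos:
  "red u \<noteq> None \<Longrightarrow> (\<And>t. balance (take t u) \<le> 0) \<Longrightarrow> in_Mminus (red u)"
proof (induction u rule: rev_induct)
  case (snoc a u)
  have "red u \<noteq> None"
    using snoc.prems(1) red_append_nonzero by blast
  moreover have "balance (take t u) \<le> 0" for t
    using snoc.prems(2)[of t] snoc.prems(2)[of "length u"] by (cases "t \<le> length u") simp_all
  ultimately obtain l where l: "red u = Some ([], l)"
    using snoc.IH by (auto simp: in_Mminus_def)
  have "height a \<le> int (length l)"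
    using snoc.prems(2)[of "Suc (length u)"] red_balance[OF l] by simp
  with snoc.prems(1) l show ?case
    by (cases a) (auto simp: in_Mminus_def red_snoc munit_def split: if_splits)
qed (simp add: in_Mminus_def munit_def)

(* The first rho of the reduced remainder is the nearest unmatched rho to the right. *)
fun assign_lam :: "sym list \<Rightarrow> sym list" where
  "assign_lam [] = []"
| "assign_lam (Lam i # w) =
     (case red (assign_lam w) of Some (j # _, _) \<Rightarrow> Lam j | _ \<Rightarrow> Lam 1) # assign_lam w"
| "assign_lam (a # w) = a # assign_lam w"

lemma red_assign_lam: "\<exists>r m. red (assign_lam w) = Some (r, replicate m 1)"
proof (induction w rule: assign_lam.induct)
  case (2 i w)
  then obtain r m where "red (assign_lam w) = Some (r, replicate m 1)"
    by blast
  then show ?case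
    by (cases r) (auto simp: red_Cons replicate_append_same intro: exI[of _ "Suc m"])
qed (auto simp: red_Cons munit_def)

lemma map_collapse_assign_lam: "map collapse (assign_lam w) = map collapse w"
  by (induction w rule: assign_lam.induct) (auto split: option.splits list.splits)

lemma assign_lam_alphabet:
  "set w \<subseteq> alphabet' M N \<Longrightarrow> 1 \<le> M \<Longrightarrow> set (assign_lam w) \<subseteq> alphabet M N"
proof (induction w rule: assign_lam.induct)
  case (2 i w)
  have "Lam j \<in> alphabet M N" if "red (assign_lam w) = Some (j # r, l)" for j r l
  proof -
    have "Rho j \<in> alphabet M N"
      using red_Rho_indices[OF that] 2 by auto
    then show ?thesis by (simp add: alphabet_def)
  qed
  with 2 show ?case
    by (auto simp: alphabet_def split: option.splits list.splits)
qed (auto simp: alphabet_def alphabet'_def)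

lemma map_collapse_id: "set w \<subseteq> alphabet' M N \<Longrightarrow> map collapse w = w"
  by (induction w) (auto simp: alphabet'_def)

lemma collapse_alphabet: "a \<in> alphabet M N \<Longrightarrow> collapse a \<in> alphabet' M N"
  by (auto simp: alphabet'_def alphabet_def)

lemma exists_max_prefix_balance: "\<exists>k \<le> length w. \<forall>t. balance (take t w) \<le> balance (take k w)"
proof -
  let ?S = "(\<lambda>t. balance (take t w)) ` {..length w}"
  have "Max ?S \<in> ?S"
    by (intro Max_in) auto
  then obtain k where k: "Max ?S = balance (take k w)" "k \<in> {..length w}"
    by (rule imageE)
  have "balance (take t w) \<le> balance (take k w)" for t
  proof -
    have "take t w = take (min t (length w)) w"
      by (simp add: min_def)
    moreover have "balance (take (min t (length w)) w) \<in> ?S"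
      by auto
    ultimately show ?thesis
      unfolding k(1)[symmetric] by (metis Max_ge finite_atMost finite_imageI)
  qed
  with k(2) show ?thesis by auto
qed

lemma collapse_surj:
  assumes w: "set w \<subseteq> alphabet' M N" and M: "1 \<le> M"
  shows "\<exists>a. set a \<subseteq> alphabet M N \<and> red a \<noteq> None \<and> plus_or_lambda1_power (multiplier a)
             \<and> map collapse a = w"
proof -
  obtain k where k: "k \<le> length w" and max: "\<And>t. balance (take t w) \<le> balance (take k w)"
    using exists_max_prefix_balance by blast
  define v where "v = drop k w @ take k w"
  define b where "b = assign_lam v"
  define a1 where "a1 = drop (length w - k) b"
  define a2 where "a2 = take (length w - k) b"
  have v: "set v \<subseteq> alphabet' M N"
    using w by (auto simp: v_def dest: in_set_takeD in_set_dropD)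
  have "map collapse b = v"
    using map_collapse_assign_lam map_collapse_id[OF v] by (simp add: b_def)
  then have c1: "map collapse a1 = take k w" and c2: "map collapse a2 = drop k w"
    using k by (simp_all add: a1_def a2_def v_def flip: drop_map take_map)
  have b: "b = a2 @ a1"
    by (simp add: a1_def a2_def)
  obtain r m where rb: "red b = Some (r, replicate m 1)"
    using red_assign_lam unfolding b_def by blast
  then have nonzero: "red a1 \<noteq> None" "red a2 \<noteq> None"
    using red_append_nonzero[of a2 a1] unfolding b by auto
  have "in_Mplus (red a1)"
  proof (rule in_Mplus_red_if_suffix_balance_nonneg)
    show "red a1 \<noteq> None"
      by (fact nonzero)
    fix t
    have "balance (drop t a1) = balance (drop t (take k w))"
      by (metis balance_map_collapse c1 drop_map)
    also have "\<dots> = balance (take k w) - balance (take (min t k) w)"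
      using append_take_drop_id[of t "take k w"] balance_append[of "take t (take k w)" "drop t (take k w)"]
      by (simp add: min.commute)
    finally show "0 \<le> balance (drop t a1)"
      using max[of "min t k"] by linarith
  qed
  moreover have "in_Mminus (red a2)"
  proof (rule in_Mminus_red_if_prefix_balance_nonpos)
    show "red a2 \<noteq> None"
      by (fact nonzero)
    fix t
    have "balance (take t a2) = balance (take t (drop k w))"
      by (metis balance_map_collapse c2 take_map)
    also have "\<dots> = balance (take (k + t) w) - balance (take k w)"
      by (simp add: take_add)
    finally show "balance (take t a2) \<le> 0"
      using max[of "k + t"] by linarith
  qed
  ultimately obtain r1 l2 where r1: "red a1 = Some (r1, [])" and l2: "red a2 = Some ([], l2)"
    by (auto simp: in_Mplus_def in_Mminus_def)
  then have red_a: "red (a1 @ a2) = Some (r1, l2)"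
    by (simp add: red_append)
  have mult: "multiplier (a1 @ a2) = Some (r, replicate m 1)"
    using multiplier_eq[OF red_a] r1 l2 rb b by (simp add: red_append)
  then have "r = [] \<or> m = 0"
    using multiplier_Mplus_or_Mminus[of "a1 @ a2"] red_a by (auto simp: in_Mplus_def in_Mminus_def)
  with mult have "plus_or_lambda1_power (multiplier (a1 @ a2))"
    by (auto simp: plus_or_lambda1_power_def in_Mplus_def)
  moreover have "set (a1 @ a2) \<subseteq> alphabet M N"
    using assign_lam_alphabet[OF v M] b by (auto simp: b_def)
  ultimately show ?thesis
    using red_a c1 c2 by (intro exI[of _ "a1 @ a2"]) simp
qed

lemma bij_betw_map_collapse:
  assumes "1 \<le> M"
  shows "bij_betw (map collapse) (blocks_with_multiplier M N n plus_or_lambda1_power)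
           {w. length w = n \<and> set w \<subseteq> alphabet' M N}"
  unfolding bij_betw_def
proof (intro conjI subset_antisym)
  show "inj_on (map collapse) (blocks_with_multiplier M N n plus_or_lambda1_power)"
    by (rule inj_on_subset[OF inj_on_map_collapse]) (auto simp: blocks_with_multiplier_def)
  show "map collapse ` blocks_with_multiplier M N n plus_or_lambda1_power
          \<subseteq> {w. length w = n \<and> set w \<subseteq> alphabet' M N}"
    by (force simp: blocks_with_multiplier_def intro: collapse_alphabet)
  show "{w. length w = n \<and> set w \<subseteq> alphabet' M N}
          \<subseteq> map collapse ` blocks_with_multiplier M N n plus_or_lambda1_power"
  proof clarify
    fix w assume "set w \<subseteq> alphabet' M N"
    then obtain a where "set a \<subseteq> alphabet M N" "red a \<noteq> None" "plus_or_lambda1_power (multiplier a)"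
      and "map collapse a = w"
      using collapse_surj assms by blast
    then show "w \<in> map collapse ` blocks_with_multiplier M N (length w) plus_or_lambda1_power"
      by (force simp: blocks_with_multiplier_def)
  qed
qed

theorem proposition2p1:
  fixes M N n :: nat
  assumes "1 \<le> M" and "1 \<le> n"
  shows "\<exists>f. bij_betw f
           {x \<in> per_pts (motzkin M N) n.
              positive (multiplier (block x n)) \<or> neutral (multiplier (block x n)) \<or>
              (\<exists>k\<ge>1. multiplier (block x n) = Some ([], replicate k 1))}
           {w. length w = n \<and> set w \<subseteq> alphabet' M N}"
proof -
  have classes: "positive m \<or> neutral m \<or> (\<exists>k\<ge>1. m = Some ([], replicate k 1)) \<longleftrightarrow>
      plus_or_lambda1_power m" for m
    by (auto simp: positive_def neutral_def plus_or_lambda1_power_def in_Mplus_def munit_def)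
  have "bij_betw (\<lambda>x. block x n)
      {x \<in> per_pts (motzkin M N) n. plus_or_lambda1_power (multiplier (block x n))}
      (blocks_with_multiplier M N n plus_or_lambda1_power)"
    by (rule bij_betw_block_per_pts)
      (use assms(2) in \<open>auto simp: plus_or_lambda1_power_def in_Mplus_def\<close>)
  moreover have "bij_betw (map collapse) (blocks_with_multiplier M N n plus_or_lambda1_power)
      {w. length w = n \<and> set w \<subseteq> alphabet' M N}"
    using assms(1) by (rule bij_betw_map_collapse)
  ultimately show ?thesis
    unfolding classes by (blast intro: bij_betw_trans)
qed

end
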